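(* Let $\mathcal{D}$ be any basic action theory (including (P1), (P2) and $(\star)$) with a sensing action $\mathit{obs}(z)$ sensing the fluent $f$, with likelihood axiom $l(\mathit{obs}(z),s) = u \equiv u = \mathit{Err}(z,f(s))$ and precondition axiom $\mathit{Poss}(\mathit{obs}(z),s)\equiv \mathit{true}$, where $\mathit{Err}(u_1,u_2)$ is an expression with only two free (numeric) variables, and where $\mathit{obs}(z)$ does not change the value of any fluent. Let $u$ be the variable among $\vec x = (x_1,\ldots,x_m)$ corresponding to the values of $f$, and let $a,b$ be terms. Then $$\mathcal{D}\models \textit{Bel}(a \le f \le b, do(\mathit{obs}(z),S_0)) = \frac{\int_{\vec x}[P(\vec x, f = u \land a \le u \le b, S_0)\times \mathit{Err}(z,u)]}{\int_{\vec x}[P(\vec x, f = u, S_0)\times\mathit{Err}(z,u)]}.$$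
   Context: Situation calculus: a many-sorted language $\mathcal{L}$ with sorts action, situation, object; $do(a,s)$ is the successor of $s$ under action $a$, $do(\alpha,s)$ for a sequence $\alpha$ is iterated $do$; $S_0$ the actual initial situation; $\mathit{Init}(s) \doteq \neg\exists a,s'.\, s = do(a,s')$; $\iota$ ranges over initial situations. The fluents $f_1,\ldots,f_m$ (one of which is $f$) are all the fluents, take only a situation argument, and take values in $\mathbb{R}$; $i$ ranges over their indices. $\phi[s]$ restores situation argument $s$ in situation-suppressed $\phi$. $\langle z.\ \psi \to t\rangle = v$ abbreviates $[(\exists z\psi)\supset \forall z(\psi \supset v = t)] \land [(\neg\exists z\psi) \supset v = 0]$. Distinguished symbols: $\mathit{Poss}(a,s)$, $p(s',s)$ (density of $s'$ when in $s$), $l(a,s)$ (likelihood). A basic action theory consists of an initial theory containing (P1) $\forall \iota,s.\ p(s,\iota) \ge 0 \land (p(s,\iota) > 0 \supset \mathit{Init}(s))$ and $(\star)$ $[\forall \vec x\, \exists \iota \bigwedge_i f_i(\iota) = x_i] \land [\forall \iota,\iota'.\ \bigwedge_i f_i(\iota) = f_i(\iota') \supset \iota = \iota']$; precondition axioms; successor state axioms including (P2) $p(s',do(a,s)) = v \equiv \exists s''[s' = do(a,s'') \land \mathit{Poss}(a,s'') \land v = p(s'',s)\times l(a,s'')] \lor \neg\exists s''[s'=do(a,s'')\land \mathit{Poss}(a,s'')] \land v = 0$; likelihood axioms; foundational axioms. For a ground action sequence $\alpha$, $P(\vec x,\phi,do(\alpha,S_0)) \doteq \langle \iota.\ \bigwedge_i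 f_i(\iota) = x_i \land \phi[do(\alpha,\iota)] \to p(do(\alpha,\iota),do(\alpha,S_0))\rangle$ (with $\alpha$ empty giving $P(\vec x,\phi,S_0)$), and $\textit{Bel}(\phi,s) \doteq \frac{1}{\gamma}\int_{\vec x} P(\vec x,\phi,s)$ with $\gamma$ the numerator with $\phi$ replaced by $\mathit{true}$. $\int_{\vec x}$ is the logical abbreviation of the improper Riemann integral over $\mathbb{R}^m$, and entailment is over $\mathbb{R}$-interpretations (structures where arithmetic, $e$, $\pi$, exponentiation and logarithms have their usual meaning over the reals). *)

theory Defs
  imports "HOL-Analysis.Analysis"
begin

text \<open>Semantic rendering of the situation calculus: an R-interpretation is given by
  carriers for actions ('a) and situations ('s), the function do, the constant S0,
  the distinguished symbols Poss, p, l, the fluents F i (i = 1..m), the sensing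
  action obs, and the denotation Err of the error expression.\<close>

definition Init :: "('a \<Rightarrow> 's \<Rightarrow> 's) \<Rightarrow> 's \<Rightarrow> bool" where
  "Init do s \<longleftrightarrow> \<not> (\<exists>a s'. s = do a s')"

fun do_seq :: "('a \<Rightarrow> 's \<Rightarrow> 's) \<Rightarrow> 'a list \<Rightarrow> 's \<Rightarrow> 's" where
  "do_seq do [] s = s"
| "do_seq do (a # as) s = do_seq do as (do a s)"

text \<open>The construct < z. psi -> t > (value t if psi is satisfiable, and t is then
  determined; 0 if psi is unsatisfiable).\<close>
definition guarded_val :: "('z \<Rightarrow> bool) \<Rightarrow> ('z \<Rightarrow> real) \<Rightarrow> real" where
  "guarded_val psi t = (if \<exists>z. psi z then (THE v. \<forall>z. psi z \<longrightarrow> v = t z) else 0)"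

text \<open>P(x, phi, do(alpha, S0)); phi is given with its situation argument restored.\<close>
definition Pdens ::
  "('a \<Rightarrow> 's \<Rightarrow> 's) \<Rightarrow> 's \<Rightarrow> ('s \<Rightarrow> 's \<Rightarrow> real) \<Rightarrow> (nat \<Rightarrow> 's \<Rightarrow> real) \<Rightarrow> nat
    \<Rightarrow> 'a list \<Rightarrow> ('s \<Rightarrow> bool) \<Rightarrow> (nat \<Rightarrow> real) \<Rightarrow> real" where
  "Pdens do S0 p F m alpha phi x =
     guarded_val
       (\<lambda>\<iota>. Init do \<iota> \<and> (\<forall>i\<in>{1..m}. F i \<iota> = x i) \<and> phi (do_seq do alpha \<iota>))
       (\<lambda>\<iota>. p (do_seq do alpha \<iota>) (do_seq do alpha S0))"

definition improper_int :: "(real \<Rightarrow> real) \<Rightarrow> real" where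
  "improper_int h = Lim at_top (\<lambda>u::real. integral {-u..u} h)"

text \<open>Integral over R^m as iterated improper integral; variable x_i for i = 1..m
  (x_m outermost). Components outside 1..m are irrelevant (set to 0).\<close>
fun nint :: "nat \<Rightarrow> ((nat \<Rightarrow> real) \<Rightarrow> real) \<Rightarrow> real" where
  "nint 0 g = g (\<lambda>_. 0)"
| "nint (Suc n) g = improper_int (\<lambda>t. nint n (\<lambda>x. g (x(Suc n := t))))"

definition Bel ::
  "('a \<Rightarrow> 's \<Rightarrow> 's) \<Rightarrow> 's \<Rightarrow> ('s \<Rightarrow> 's \<Rightarrow> real) \<Rightarrow> (nat \<Rightarrow> 's \<Rightarrow> real) \<Rightarrow> nat
    \<Rightarrow> 'a list \<Rightarrow> ('s \<Rightarrow> bool) \<Rightarrow> real" where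
  "Bel do S0 p F m alpha phi =
     (1 / nint m (Pdens do S0 p F m alpha (\<lambda>_. True))) * nint m (Pdens do S0 p F m alpha phi)"

definition bat_model ::
  "('a \<Rightarrow> 's \<Rightarrow> 's) \<Rightarrow> 's \<Rightarrow> ('a \<Rightarrow> 's \<Rightarrow> bool) \<Rightarrow> ('s \<Rightarrow> 's \<Rightarrow> real) \<Rightarrow> ('a \<Rightarrow> 's \<Rightarrow> real)
    \<Rightarrow> (nat \<Rightarrow> 's \<Rightarrow> real) \<Rightarrow> nat \<Rightarrow> nat \<Rightarrow> (real \<Rightarrow> 'a) \<Rightarrow> (real \<Rightarrow> real \<Rightarrow> real) \<Rightarrow> bool" where
  "bat_model do S0 Poss p l F m k obs Err \<longleftrightarrow>
     k \<in> {1..m}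
     \<comment> \<open>foundational axioms\<close>
     \<and> (\<forall>a s a' s'. do a s = do a' s' \<longrightarrow> a = a' \<and> s = s')
     \<and> (\<forall>Q. (\<forall>s. Init do s \<longrightarrow> Q s) \<and> (\<forall>a s. Q s \<longrightarrow> Q (do a s)) \<longrightarrow> (\<forall>s. Q s))
     \<and> Init do S0
     \<comment> \<open>(P1)\<close>
     \<and> (\<forall>\<iota> s. Init do \<iota> \<longrightarrow> p s \<iota> \<ge> 0 \<and> (p s \<iota> > 0 \<longrightarrow> Init do s))
     \<comment> \<open>(star)\<close>
     \<and> (\<forall>x::nat \<Rightarrow> real. \<exists>\<iota>. Init do \<iota> \<and> (\<forall>i\<in>{1..m}. F i \<iota> = x i))
     \<and> (\<forall>\<iota> \<iota>'. Init do \<iota> \<and> Init do \<iota>' \<and> (\<forall>i\<in>{1..m}. F i \<iota> = F i \<iota>') \<longrightarrow> \<iota> = \<iota>')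
     \<comment> \<open>(P2)\<close>
     \<and> (\<forall>s' a s v. p s' (do a s) = v \<longleftrightarrow>
          (\<exists>s''. s' = do a s'' \<and> Poss a s'' \<and> v = p s'' s * l a s'')
          \<or> (\<not> (\<exists>s''. s' = do a s'' \<and> Poss a s'') \<and> v = 0))
     \<comment> \<open>sensing action obs(z) for fluent f = F k\<close>
     \<and> (\<forall>z s. Poss (obs z) s)
     \<and> (\<forall>z s. l (obs z) s = Err z (F k s))
     \<and> (\<forall>z s i. i \<in> {1..m} \<longrightarrow> F i (do (obs z) s) = F i s)"

end

theory Submission
  imports Defs
begin

text \<open>By the uniqueness half of (star), a value vector x names at most one initial situation,
  so P(x, phi, s) is just the density of the successor of that situation when it satisfies phi,
  and 0 otherwise. The sensing action leaves every fluent unchanged and, by (P2), multiplies the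
  density by its likelihood Err(z, f); so after obs(z) the integrands of both the numerator and
  the normalising factor of Bel are the initial ones multiplied pointwise by Err(z, u).\<close>

lemma guarded_val_unique:
  assumes "P i" and "\<And>j. P j \<Longrightarrow> j = i"
  shows "guarded_val P t = t i"
proof -
  have "(THE v. \<forall>z. P z \<longrightarrow> v = t z) = t i"
    by (rule the_equality) (use assms in blast)+
  with assms(1) show ?thesis
    unfolding guarded_val_def by auto
qed

lemma guarded_val_unsat:
  assumes "\<And>j. \<not> P j"
  shows "guarded_val P t = 0"
  using assms unfolding guarded_val_def by auto

lemma Pdens_at_initial:
  assumes "Init do \<iota>" and "\<forall>i\<in>{1..m}. F i \<iota> = x i"
    and unique: "\<And>\<iota>'. Init do \<iota>' \<Longrightarrow> \<forall>i\<in>{1..m}. F i \<iota>' = x i \<Longrightarrow> \<iota>' = \<iota>"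
  shows "Pdens do S0 p F m alpha phi x
       = (if phi (do_seq do alpha \<iota>) then p (do_seq do alpha \<iota>) (do_seq do alpha S0) else 0)"
proof (cases "phi (do_seq do alpha \<iota>)")
  case True
  have "Pdens do S0 p F m alpha phi x = p (do_seq do alpha \<iota>) (do_seq do alpha S0)"
    unfolding Pdens_def by (rule guarded_val_unique) (use assms(1,2) True in simp, use unique in blast)
  with True show ?thesis by simp
next
  case False
  have "Pdens do S0 p F m alpha phi x = 0"
    unfolding Pdens_def by (rule guarded_val_unsat) (use unique False in metis)
  with False show ?thesis by simp
qed

lemma density_do_possible:
  assumes P2: "\<forall>s' a s v. p s' (do a s) = v \<longleftrightarrow>
          (\<exists>s''. s' = do a s'' \<and> Poss a s'' \<and> v = p s'' s * l a s'')
          \<or> (\<not> (\<exists>s''. s' = do a s'' \<and> Poss a s'') \<and> v = 0)"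
    and "Poss a s'"
  shows "p (do a s') (do a s) = p s' s * l a s'"
  using P2[rule_format, of "do a s'" a s "p s' s * l a s'"] assms(2) by blast

lemma bat_modelD:
  assumes "bat_model do S0 Poss p l F m k obs Err"
  shows bat_model_fluent_index: "k \<in> {1..m}"
    and bat_model_initial_exists: "\<exists>\<iota>. Init do \<iota> \<and> (\<forall>i\<in>{1..m}. F i \<iota> = x i)"
    and bat_model_initial_unique:
      "Init do \<iota> \<Longrightarrow> Init do \<iota>' \<Longrightarrow> \<forall>i\<in>{1..m}. F i \<iota> = F i \<iota>' \<Longrightarrow> \<iota> = \<iota>'"
    and bat_model_P2: "\<forall>s' a s v. p s' (do a s) = v \<longleftrightarrow>
          (\<exists>s''. s' = do a s'' \<and> Poss a s'' \<and> v = p s'' s * l a s'')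
          \<or> (\<not> (\<exists>s''. s' = do a s'' \<and> Poss a s'') \<and> v = 0)"
    and bat_model_Poss_obs: "Poss (obs z) s"
    and bat_model_likelihood_obs: "l (obs z) s = Err z (F k s)"
    and bat_model_obs_preserves_fluents: "i \<in> {1..m} \<Longrightarrow> F i (do (obs z) s) = F i s"
  using assms unfolding bat_model_def by (elim conjE; blast)+

lemma bat_model_density_obs:
  assumes "bat_model do S0 Poss p l F m k obs Err"
  shows "p (do (obs z) s) (do (obs z) S0) = p s S0 * Err z (F k s)"
  using density_do_possible[OF bat_model_P2[OF assms] bat_model_Poss_obs[OF assms]]
  by (simp add: bat_model_likelihood_obs[OF assms])

lemma Pdens_obs:
  assumes M: "bat_model do S0 Poss p l F m k obs Err"
  shows "Pdens do S0 p F m [obs z] (\<lambda>s. R (F k s)) x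
       = Pdens do S0 p F m [] (\<lambda>s. F k s = x k \<and> R (x k)) x * Err z (x k)"
proof -
  obtain \<iota> where \<iota>: "Init do \<iota>" "\<forall>i\<in>{1..m}. F i \<iota> = x i"
    using bat_model_initial_exists[OF M] by blast
  have unique: "\<iota>' = \<iota>" if "Init do \<iota>'" "\<forall>i\<in>{1..m}. F i \<iota>' = x i" for \<iota>'
    using bat_model_initial_unique[OF M that(1) \<iota>(1)] that(2) \<iota>(2) by simp
  have "F k \<iota> = x k"
    using \<iota>(2) bat_model_fluent_index[OF M] by blast
  moreover have "F k (do (obs z) \<iota>) = F k \<iota>"
    using bat_model_obs_preserves_fluents[OF M bat_model_fluent_index[OF M]] .
  ultimately show ?thesis
    by (simp add: Pdens_at_initial[where F = F and x = x, OF \<iota> unique]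
        bat_model_density_obs[OF M])
qed

theorem mainTheorem13:
  fixes do :: "'a \<Rightarrow> 's \<Rightarrow> 's" and S0 :: 's and Poss :: "'a \<Rightarrow> 's \<Rightarrow> bool"
    and p :: "'s \<Rightarrow> 's \<Rightarrow> real" and l :: "'a \<Rightarrow> 's \<Rightarrow> real"
    and F :: "nat \<Rightarrow> 's \<Rightarrow> real" and m k :: nat
    and obs :: "real \<Rightarrow> 'a" and Err :: "real \<Rightarrow> real \<Rightarrow> real"
    and a b z :: real
  assumes "bat_model do S0 Poss p l F m k obs Err"
  shows "Bel do S0 p F m [obs z] (\<lambda>s. a \<le> F k s \<and> F k s \<le> b)
         = nint m (\<lambda>x. Pdens do S0 p F m [] (\<lambda>s. F k s = x k \<and> a \<le> x k \<and> x k \<le> b) x * Err z (x k))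
           / nint m (\<lambda>x. Pdens do S0 p F m [] (\<lambda>s. F k s = x k) x * Err z (x k))"
proof -
  have "Pdens do S0 p F m [obs z] (\<lambda>s. a \<le> F k s \<and> F k s \<le> b)
      = (\<lambda>x. Pdens do S0 p F m [] (\<lambda>s. F k s = x k \<and> a \<le> x k \<and> x k \<le> b) x * Err z (x k))"
    using Pdens_obs[OF assms, where R = "\<lambda>r. a \<le> r \<and> r \<le> b"] by (intro ext) simp
  moreover have "Pdens do S0 p F m [obs z] (\<lambda>_. True)
      = (\<lambda>x. Pdens do S0 p F m [] (\<lambda>s. F k s = x k) x * Err z (x k))"
    using Pdens_obs[OF assms, where R = "\<lambda>_. True"] by (intro ext) simp
  ultimately show ?thesis
    unfolding Bel_def by simp
qed

end
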